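(* Let $I$ be a quasipolar general ring and let $A$ be a two-sided ideal of $I$. Then $A$ is a quasipolar general ring.
   Context: A general ring is an associative ring not necessarily having an identity. For a general ring $K$ and $p,q\in K$, $p*q=p+q-pq$; $Q(K)=\{q\in K\mid p*q=0=q*p\text{ for some }p\in K\}$; $\mathrm{comm}_K(a)=\{x\in K\mid xa=ax\}$, $\mathrm{comm}_K^2(a)=\{x\in K\mid xy=yx\text{ for all }y\in\mathrm{comm}_K(a)\}$; $QN(K)=\{q\in K\mid qx\in Q(K)\text{ for all }x\in\mathrm{comm}_K(q)\}$. An element $a\in K$ is quasipolar in $K$ if there is an idempotent $p\in\mathrm{comm}_K^2(a)$ with $a+p\in Q(K)$ and $a-ap\in QN(K)$; $K$ is a quasipolar general ring if every element of $K$ is quasipolar in $K$ (all notions computed inside $K$). *)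

theory Defs
  imports Main
begin

text \<open>General rings: the type class ring in Main is associative and NOT required
to have an identity. A general ring is modelled as a subset K of such a type that is
closed under the ring operations (a subring without identity); all notions are
computed inside K.\<close>

definition gsubring :: "'a::ring set \<Rightarrow> bool" where
  "gsubring K \<longleftrightarrow> 0 \<in> K \<and> (\<forall>x\<in>K. \<forall>y\<in>K. x + y \<in> K \<and> x - y \<in> K \<and> x * y \<in> K)"

definition two_sided_ideal :: "'a::ring set \<Rightarrow> 'a set \<Rightarrow> bool" where
  "two_sided_ideal A I \<longleftrightarrow> A \<subseteq> I \<and> 0 \<in> A \<and>
     (\<forall>x\<in>A. \<forall>y\<in>A. x + y \<in> A \<and> x - y \<in> A) \<and>
     (\<forall>x\<in>A. \<forall>r\<in>I. r * x \<in> A \<and> x * r \<in> A)"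

definition circ :: "'a::ring \<Rightarrow> 'a \<Rightarrow> 'a" where
  "circ p q = p + q - p * q"

definition Qset :: "'a::ring set \<Rightarrow> 'a set" where
  "Qset K = {q \<in> K. \<exists>p\<in>K. circ p q = 0 \<and> circ q p = 0}"

definition comm_in :: "'a::ring set \<Rightarrow> 'a \<Rightarrow> 'a set" where
  "comm_in K a = {x \<in> K. x * a = a * x}"

definition comm2_in :: "'a::ring set \<Rightarrow> 'a \<Rightarrow> 'a set" where
  "comm2_in K a = {x \<in> K. \<forall>y\<in>comm_in K a. x * y = y * x}"

definition QN :: "'a::ring set \<Rightarrow> 'a set" where
  "QN K = {q \<in> K. \<forall>x\<in>comm_in K q. q * x \<in> Qset K}"

definition quasipolar_in :: "'a::ring set \<Rightarrow> 'a \<Rightarrow> bool" where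
  "quasipolar_in K a \<longleftrightarrow> (\<exists>p. p \<in> comm2_in K a \<and> p * p = p \<and> a + p \<in> Qset K \<and> a - a * p \<in> QN K)"

definition quasipolar_general_ring :: "'a::ring set \<Rightarrow> bool" where
  "quasipolar_general_ring K \<longleftrightarrow> gsubring K \<and> (\<forall>a\<in>K. quasipolar_in K a)"

end

theory Submission
  imports Defs
begin

text \<open>An ideal A of I absorbs quasi-inverses: if q \<circ> r = 0 then r = q r - q, so r \<in> A
whenever q \<in> A and r \<in> I. Hence quasi-invertibility and quasinilpotency of elements of A
are the same whether computed in A or in I. For a quasipolar a \<in> A with spectral
idempotent p, the equation (a + p) \<circ> q = 0 multiplied by p gives p = a (p q - p),
so p \<in> A as well, and the data witnessing quasipolarity in I already live in A.\<close>

lemma gsubring_if_two_sided_ideal: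
  assumes "two_sided_ideal A I"
  shows "gsubring A"
  using assms unfolding two_sided_ideal_def gsubring_def by blast

lemma comm_in_mono:
  assumes "A \<subseteq> I"
  shows "comm_in A a \<subseteq> comm_in I a"
  using assms unfolding comm_in_def by blast

lemma comm2_in_subset:
  assumes "A \<subseteq> I" "p \<in> comm2_in I a" "p \<in> A"
  shows "p \<in> comm2_in A a"
  using assms comm_in_mono[OF assms(1)] unfolding comm2_in_def by blast

lemma circ_eq_0_right:
  fixes q r :: "'a::ring"
  assumes "circ q r = 0"
  shows "r = q * r - q"
  using assms by (simp add: circ_def algebra_simps)

lemma Qset_two_sided_ideal:
  assumes "two_sided_ideal A I" "x \<in> A" "x \<in> Qset I"
  shows "x \<in> Qset A"
proof -
  obtain r where r: "r \<in> I" "circ r x = 0" "circ x r = 0"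
    using assms(3) unfolding Qset_def by blast
  have "x * r \<in> A"
    using assms(1,2) r(1) unfolding two_sided_ideal_def by blast
  then have "x * r - x \<in> A"
    using assms(1,2) unfolding two_sided_ideal_def by blast
  then have "r \<in> A"
    using circ_eq_0_right[OF r(3)] by simp
  then show ?thesis
    using assms(2) r(2,3) unfolding Qset_def by blast
qed

lemma QN_two_sided_ideal:
  assumes "two_sided_ideal A I" "b \<in> A" "b \<in> QN I"
  shows "b \<in> QN A"
  unfolding QN_def
proof (intro CollectI conjI ballI)
  show "b \<in> A" by (fact assms(2))
next
  fix x assume x: "x \<in> comm_in A b"
  have AI: "A \<subseteq> I" using assms(1) unfolding two_sided_ideal_def by blast
  have "b * x \<in> Qset I"
    using assms(3) comm_in_mono[OF AI] x unfolding QN_def by blast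
  moreover have "b * x \<in> A"
    using assms(1,2) x AI unfolding comm_in_def two_sided_ideal_def by blast
  ultimately show "b * x \<in> Qset A"
    using Qset_two_sided_ideal[OF assms(1)] by blast
qed

lemma idempotent_eq_mult_if_circ_eq_0:
  fixes a p q :: "'a::ring"
  assumes "p * a = a * p" "p * p = p" "circ (a + p) q = 0"
  shows "p = a * (p * q - p)"
proof -
  have "(a + p) + q = (a + p) * q"
    using assms(3) by (simp add: circ_def algebra_simps)
  then have "p * ((a + p) + q) = p * ((a + p) * q)" by simp
  moreover have "p * ((a + p) + q) = a * p + p + p * q"
    using assms(1,2) by (simp add: distrib_left)
  moreover have "p * ((a + p) * q) = (p * a + p * p) * q"
    by (simp add: distrib_left distrib_right mult.assoc)
  moreover have "\<dots> = a * p * q + p * q"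
    using assms(1,2) by (simp add: distrib_right)
  ultimately have "p = a * p * q - a * p" by (simp add: algebra_simps)
  then show ?thesis by (simp add: right_diff_distrib mult.assoc)
qed

lemma spectral_idempotent_in_ideal:
  assumes "two_sided_ideal A I" "gsubring I" "a \<in> A"
    and "p \<in> comm2_in I a" "p * p = p" "a + p \<in> Qset I"
  shows "p \<in> A"
proof -
  have AI: "A \<subseteq> I" using assms(1) unfolding two_sided_ideal_def by blast
  have "p \<in> I" "p * a = a * p"
    using assms(3,4) AI unfolding comm2_in_def comm_in_def by blast+
  moreover obtain q where q: "q \<in> I" "circ (a + p) q = 0"
    using assms(6) unfolding Qset_def by blast
  ultimately have "p * q - p \<in> I"
    using assms(2) unfolding gsubring_def by blast
  then have "a * (p * q - p) \<in> A"
    using assms(1,3) unfolding two_sided_ideal_def by blast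
  then show ?thesis
    using idempotent_eq_mult_if_circ_eq_0[OF \<open>p * a = a * p\<close> assms(5) q(2)] by simp
qed

lemma quasipolar_in_two_sided_ideal:
  assumes "two_sided_ideal A I" "gsubring I" "a \<in> A" "quasipolar_in I a"
  shows "quasipolar_in A a"
proof -
  obtain p where p: "p \<in> comm2_in I a" "p * p = p" "a + p \<in> Qset I" "a - a * p \<in> QN I"
    using assms(4) unfolding quasipolar_in_def by blast
  have AI: "A \<subseteq> I" using assms(1) unfolding two_sided_ideal_def by blast
  have pA: "p \<in> A"
    using spectral_idempotent_in_ideal[OF assms(1-3) p(1-3)] .
  have "a + p \<in> A" "a - a * p \<in> A"
    using assms(1,3) pA AI unfolding two_sided_ideal_def by blast+
  then show ?thesis
    unfolding quasipolar_in_def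
    using comm2_in_subset[OF AI p(1) pA] p(2)
      Qset_two_sided_ideal[OF assms(1) _ p(3)] QN_two_sided_ideal[OF assms(1) _ p(4)]
    by blast
qed

theorem theorem3p2:
  fixes I A :: "'a::ring set"
  assumes "quasipolar_general_ring I"
    and "two_sided_ideal A I"
  shows "quasipolar_general_ring A"
proof -
  have "gsubring I" "\<forall>a\<in>I. quasipolar_in I a"
    using assms(1) unfolding quasipolar_general_ring_def by blast+
  moreover have "A \<subseteq> I"
    using assms(2) unfolding two_sided_ideal_def by blast
  ultimately have "\<forall>a\<in>A. quasipolar_in A a"
    using quasipolar_in_two_sided_ideal[OF assms(2)] by blast
  then show ?thesis
    unfolding quasipolar_general_ring_def
    using gsubring_if_two_sided_ideal[OF assms(2)] by blast
qed

end
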